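(* Let $A,B$ be nonempty persistence diagrams, $d_0=\min\{d_\infty(A,B),d_\infty(D_0,B)\}$, $\Theta(c)=d_\infty(cA,B)$, and let $b^{(m)}=(b^{(m)}_x,b^{(m)}_y)$ be a point of $\chi(B)$ with the largest $y$-coordinate among points of $\chi(B)$. Then: (i) if $0\le c\le \dfrac{b^{(m)}_y-d_0}{\mathrm{bd}(A)}$, then $\Theta(c)\ge d_0$; (ii) if $0\le c\le \min\Big\{\dfrac{b^{(m)}_y+b^{(m)}_x}{2\,\mathrm{bd}(A)},\ \dfrac{\mathrm{pers}(B)}{\mathrm{pers}(A)}\Big\}$, then $\Theta(c)=\mathrm{pers}(B)$.
   Context: A persistence diagram is a finite multiset of points $a=(a_x,a_y)$ with $0\le a_x<a_y<\infty$ together with the diagonal $\Delta$ of infinite multiplicity; nonempty means it has at least one such point. $D_0$ is the empty diagram. $d_\infty$ is the bottleneck distance (infimum over multi-bijections between $A\cup\Delta$ and $B\cup\Delta$ of the maximal $\ell^\infty$ distance; matching $a$ to $\Delta$ costs $\mathrm{pers}(a)$). $cA=\{(ca_x,ca_y)\}$ for $c>0$, $0A=D_0$. $\mathrm{pers}(a)=(a_y-a_x)/2$; $\mathrm{pers}(A)=\max_{a\in A}\mathrm{pers}(a)$; $\chi(A)$ is the multiset of points of $A$ with persistence equal to $\mathrm{pers}(A)$; $\mathrm{bd}(A)=\max_{a\in A}a_y$. *)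

theory Defs
  imports Complex_Main "HOL-Library.Multiset"
begin

type_synonym point = "real \<times> real"
type_synonym diagram = "point multiset"

text \<open>A persistence diagram: finite multiset of off-diagonal points (the diagonal
is implicit, with infinite multiplicity).\<close>
definition is_diagram :: "diagram \<Rightarrow> bool" where
  "is_diagram A \<longleftrightarrow> (\<forall>a\<in>#A. 0 \<le> fst a \<and> fst a < snd a)"

definition pers :: "point \<Rightarrow> real" where
  "pers a = (snd a - fst a) / 2"

definition linf :: "point \<Rightarrow> point \<Rightarrow> real" where
  "linf a b = max \<bar>fst a - fst b\<bar> \<bar>snd a - snd b\<bar>"

text \<open>A (multi-)bijection between A \<union> Delta and B \<union> Delta is described by the
multiset M of pairs of off-diagonal points matched to each other; all remaining
points of A and of B are matched to the diagonal (cost pers).\<close>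
definition is_matching :: "diagram \<Rightarrow> diagram \<Rightarrow> (point \<times> point) multiset \<Rightarrow> bool" where
  "is_matching A B M \<longleftrightarrow> image_mset fst M \<subseteq># A \<and> image_mset snd M \<subseteq># B"

definition match_cost :: "diagram \<Rightarrow> diagram \<Rightarrow> (point \<times> point) multiset \<Rightarrow> real" where
  "match_cost A B M = Max (insert 0
      ((\<lambda>(a,b). linf a b) ` set_mset M
       \<union> pers ` set_mset (A - image_mset fst M)
       \<union> pers ` set_mset (B - image_mset snd M)))"

definition bottleneck :: "diagram \<Rightarrow> diagram \<Rightarrow> real" where
  "bottleneck A B = Inf (match_cost A B ` {M. is_matching A B M})"

definition D0 :: diagram where "D0 = {#}"

definition scale :: "real \<Rightarrow> diagram \<Rightarrow> diagram" where
  "scale c A = (if c > 0 then image_mset (\<lambda>(x,y). (c*x, c*y)) A else D0)"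

definition persD :: "diagram \<Rightarrow> real" where
  "persD A = Max (pers ` set_mset A)"

definition chi :: "diagram \<Rightarrow> diagram" where
  "chi A = filter_mset (\<lambda>a. pers a = persD A) A"

definition bd :: "diagram \<Rightarrow> real" where
  "bd A = Max (snd ` set_mset A)"

end

theory Submission
  imports Defs
begin

(* Fix a point b of B. A matching either sends b to the diagonal, at cost pers b, or matches it
  with a point c a of cA, at cost at least b_y - c a_y \<ge> b_y - c bd(A). Hence
  d(cA, B) \<ge> min (pers b) (b_y - c bd(A)) for every b in B; b = b^(m) gives (i), and under the
  hypothesis of (ii) both terms are at least pers(B).
  Conversely the empty matching costs the largest persistence in cA and B, which is pers(B)
  once c pers(A) \<le> pers(B). *)

lemma match_cost_ge:
  assumes "x \<in> (\<lambda>(a,b). linf a b) ` set_mset M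
       \<union> pers ` set_mset (A - image_mset fst M)
       \<union> pers ` set_mset (B - image_mset snd M)"
  shows "x \<le> match_cost A B M"
  unfolding match_cost_def by (rule Max_ge) (use assms in auto)

lemma match_cost_nonneg: "0 \<le> match_cost A B M"
  unfolding match_cost_def by (rule Max_ge) auto

lemma match_cost_empty:
  "match_cost A B {#} = Max (insert 0 (pers ` set_mset A \<union> pers ` set_mset B))"
  unfolding match_cost_def by simp

lemma bottleneck_greatest:
  assumes "\<And>M. is_matching A B M \<Longrightarrow> d \<le> match_cost A B M"
  shows "d \<le> bottleneck A B"
  unfolding bottleneck_def
proof (rule cInf_greatest)
  show "match_cost A B ` {M. is_matching A B M} \<noteq> {}"
    using is_matching_def[of A B "{#}"] by auto
qed (use assms in auto)

lemma bottleneck_le_match_cost: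
  assumes "is_matching A B M"
  shows "bottleneck A B \<le> match_cost A B M"
  unfolding bottleneck_def
proof (rule cInf_lower)
  show "bdd_below (match_cost A B ` {M. is_matching A B M})"
    by (rule bdd_belowI[of _ 0]) (auto simp: match_cost_nonneg)
qed (use assms in auto)

lemma bottleneck_le_max_pers:
  assumes "0 \<le> d" "\<And>a. a \<in># A \<Longrightarrow> pers a \<le> d" "\<And>b. b \<in># B \<Longrightarrow> pers b \<le> d"
  shows "bottleneck A B \<le> d"
proof -
  have "bottleneck A B \<le> match_cost A B {#}"
    by (rule bottleneck_le_match_cost) (simp add: is_matching_def)
  also have "\<dots> \<le> d"
    unfolding match_cost_empty using assms by auto
  finally show ?thesis .
qed

lemma matching_cost_covers_point:
  assumes "is_matching A B M" "b \<in># B"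
  shows "pers b \<le> match_cost A B M \<or> (\<exists>a\<in>#A. linf a b \<le> match_cost A B M)"
proof (cases "b \<in># B - image_mset snd M")
  case True
  then show ?thesis by (intro disjI1 match_cost_ge) auto
next
  case False
  with assms(2) have "b \<in># image_mset snd M"
    by (metis count_inI in_diff_count not_gr0 order.strict_trans1 count_greater_zero_iff)
  then obtain p where p: "p \<in># M" "b = snd p" by auto
  have "fst p \<in># image_mset fst M" using p(1) by simp
  then have "fst p \<in># A" using assms(1) unfolding is_matching_def by (meson mset_subset_eqD)
  moreover have "linf (fst p) b \<le> match_cost A B M"
    by (rule match_cost_ge) (use p in \<open>auto intro!: image_eqI[of _ _ p] split: prod.splits\<close>)
  ultimately show ?thesis by blast
qed

lemma mem_scaleE:
  assumes "a \<in># scale c A"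
  obtains x where "x \<in># A" "a = (c * fst x, c * snd x)" "0 < c"
  using assms unfolding scale_def D0_def by (auto split: if_splits)

lemma snd_le_bd: "x \<in># A \<Longrightarrow> snd x \<le> bd A"
  unfolding bd_def by (rule Max_ge) auto

lemma pers_le_persD: "x \<in># A \<Longrightarrow> pers x \<le> persD A"
  unfolding persD_def by (rule Max_ge) auto

lemma pers_pos: "is_diagram A \<Longrightarrow> a \<in># A \<Longrightarrow> 0 < pers a"
  unfolding is_diagram_def pers_def by auto

lemma persD_pos: "is_diagram A \<Longrightarrow> A \<noteq> {#} \<Longrightarrow> 0 < persD A"
  by (metis multiset_nonemptyE order.strict_trans2 pers_le_persD pers_pos)

lemma bd_pos: "is_diagram A \<Longrightarrow> A \<noteq> {#} \<Longrightarrow> 0 < bd A"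
  unfolding is_diagram_def
  by (metis multiset_nonemptyE order.strict_trans1 order.strict_trans2 snd_le_bd)

lemma pers_scale: "pers (c * fst x, c * snd x) = c * pers x"
  unfolding pers_def by (simp add: algebra_simps)

lemma bottleneck_scale_lower:
  assumes "b \<in># B"
  shows "min (pers b) (snd b - c * bd A) \<le> bottleneck (scale c A) B"
proof (rule bottleneck_greatest)
  fix M assume M: "is_matching (scale c A) B M"
  from matching_cost_covers_point[OF M assms]
  show "min (pers b) (snd b - c * bd A) \<le> match_cost (scale c A) B M"
  proof
    assume "pers b \<le> match_cost (scale c A) B M"
    then show ?thesis by linarith
  next
    assume "\<exists>a\<in>#scale c A. linf a b \<le> match_cost (scale c A) B M"
    then obtain a where a: "a \<in># scale c A" "linf a b \<le> match_cost (scale c A) B M" by blast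
    then obtain x where x: "x \<in># A" "a = (c * fst x, c * snd x)" "0 < c"
      by (auto elim: mem_scaleE)
    have "snd b - c * bd A \<le> snd b - snd a"
      using snd_le_bd[OF x(1)] x(2,3) by (simp add: mult_left_mono)
    also have "\<dots> \<le> linf a b" unfolding linf_def by auto
    finally show ?thesis using a(2) by linarith
  qed
qed

lemma bottleneck_scale_upper:
  assumes "is_diagram B" "B \<noteq> {#}" "0 \<le> c" "c * persD A \<le> persD B"
  shows "bottleneck (scale c A) B \<le> persD B"
proof (rule bottleneck_le_max_pers)
  show "0 \<le> persD B" using persD_pos[OF assms(1,2)] by simp
next
  fix a assume "a \<in># scale c A"
  then obtain x where x: "x \<in># A" "a = (c * fst x, c * snd x)" "0 < c"
    by (auto elim: mem_scaleE)
  have "pers a = c * pers x" using x(2) by (simp add: pers_scale)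
  also have "\<dots> \<le> c * persD A" using pers_le_persD[OF x(1)] x(3) by (simp add: mult_left_mono)
  finally show "pers a \<le> persD B" using assms(4) by simp
qed (rule pers_le_persD)

theorem mainTheorem6:
  fixes A B :: diagram and bm :: point
  assumes "is_diagram A" and "is_diagram B" and "A \<noteq> {#}" and "B \<noteq> {#}"
    and "bm \<in># chi B" and "\<forall>b\<in>#chi B. snd b \<le> snd bm"
  defines "d0 \<equiv> min (bottleneck A B) (bottleneck D0 B)"
  shows "(\<forall>c. 0 \<le> c \<and> c \<le> (snd bm - d0) / bd A \<longrightarrow> bottleneck (scale c A) B \<ge> d0)
    \<and> (\<forall>c. 0 \<le> c \<and> c \<le> min ((snd bm + fst bm) / (2 * bd A)) (persD B / persD A)
           \<longrightarrow> bottleneck (scale c A) B = persD B)"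
proof -
  have bm: "bm \<in># B" "pers bm = persD B" using assms(5) unfolding chi_def by auto
  have bd: "0 < bd A" and persA: "0 < persD A" using assms(1,3) by (auto intro: bd_pos persD_pos)
  have "d0 \<le> bottleneck D0 B" unfolding d0_def by simp
  also have "\<dots> \<le> persD B"
    using persD_pos[OF assms(2,4)] by (intro bottleneck_le_max_pers) (auto simp: D0_def pers_le_persD)
  finally have d0: "d0 \<le> pers bm" using bm(2) by simp
  show ?thesis
  proof (intro conjI allI impI)
    fix c assume c: "0 \<le> c \<and> c \<le> (snd bm - d0) / bd A"
    then have "d0 \<le> min (pers bm) (snd bm - c * bd A)"
      using bd d0 by (simp add: pos_le_divide_eq)
    then show "d0 \<le> bottleneck (scale c A) B"
      using bottleneck_scale_lower[OF bm(1), of c A] by linarith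
  next
    fix c assume c: "0 \<le> c \<and> c \<le> min ((snd bm + fst bm) / (2 * bd A)) (persD B / persD A)"
    then have "pers bm \<le> snd bm - c * bd A"
      using bd by (simp add: pos_le_divide_eq pers_def)
    then have "persD B \<le> bottleneck (scale c A) B"
      using bottleneck_scale_lower[OF bm(1), of c A] bm(2) by linarith
    moreover have "c * persD A \<le> persD B" using c persA by (simp add: pos_le_divide_eq)
    ultimately show "bottleneck (scale c A) B = persD B"
      using bottleneck_scale_upper[OF assms(2,4)] c by (meson order_antisym)
  qed
qed

end
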